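(* Let $\mathcal{L}:\mathbb{R}^d\to\mathbb{R}$, $\mu>0$, $\theta\in\mathbb{R}^d$, $K\ge1$ an integer, $C>0$, and $p$ a probability vector on $\{1,\dots,L\}$ with all entries positive. Let $z\sim\mathcal{N}(0,I_d)$ and, independently, $(N_1,\dots,N_L)\sim\mathrm{Multinomial}(K,p)$. Define the clipped AdaLeZO estimator blockwise by $$\tilde g^{\mathrm{Ada},(l)}=\min\!\Big(\frac{1}{K p(l)},\,C\Big)\,N_l\,\hat g^{\mathrm{ZO},(l)}(\theta;z).$$ Then $$\mathbb{E}\big[\|\tilde g^{\mathrm{Ada}}\|^2\big]\le (C+1)\,\mathbb{E}\big[\|\hat g^{\mathrm{ZO}}(\theta;z)\|^2\big].$$
   Context: The parameter vector $\theta\in\mathbb{R}^d$ is partitioned into $L$ blocks ("layers") $\theta=(\theta^{(1)},\dots,\theta^{(L)})$ with $\theta^{(l)}\in\mathbb{R}^{d_l}$, $\sum_l d_l=d$; for any $v\in\mathbb{R}^d$, $v^{(l)}$ denotes its $l$-th block. The dense symmetric zeroth-order estimator is $\hat g^{\mathrm{ZO}}(\theta;z)=\frac{\mathcal{L}(\theta+\mu z)-\mathcal{L}(\theta-\mu z)}{2\mu}\,z$ for $z\in\mathbb{R}^d$. $\mathrm{Multinomial}(K,p)$ denotes the counts $N_l$ of the value $l$ among $K$ i.i.d. draws from $p$. Norms are Euclidean; expectations may be $+\infty$. *)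

theory Defs
  imports "HOL-Probability.Probability"
begin

text \<open>Coordinates of R^d are indexed by pairs (l, j) with l in {1..L} (the block /
layer) and j < d_l (position inside the block), so d = sum of the d_l and the
l-th block v^(l) of a vector v consists of the coordinates (l, j).\<close>

definition coords :: "nat \<Rightarrow> (nat \<Rightarrow> nat) \<Rightarrow> (nat \<times> nat) set" where
  "coords L ds = {(l, j). l \<in> {1..L} \<and> j < ds l}"

definition sqnorm :: "(nat \<times> nat) set \<Rightarrow> ((nat \<times> nat) \<Rightarrow> real) \<Rightarrow> real" where
  "sqnorm I v = (\<Sum>i\<in>I. (v i)\<^sup>2)"

definition gauss :: "(nat \<times> nat) set \<Rightarrow> ((nat \<times> nat) \<Rightarrow> real) measure" where
  "gauss I = PiM I (\<lambda>_. std_normal_distribution)"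

definition draws :: "nat \<Rightarrow> nat pmf \<Rightarrow> (nat \<Rightarrow> nat) measure" where
  "draws K P = PiM {..<K} (\<lambda>_. measure_pmf P)"

text \<open>Multinomial counts: N_l = number of draws equal to l.\<close>
definition count_draws :: "nat \<Rightarrow> (nat \<Rightarrow> nat) \<Rightarrow> nat \<Rightarrow> nat" where
  "count_draws K \<omega> l = card {k \<in> {..<K}. \<omega> k = l}"

definition gZO :: "(((nat \<times> nat) \<Rightarrow> real) \<Rightarrow> real) \<Rightarrow> real \<Rightarrow> ((nat \<times> nat) \<Rightarrow> real)
    \<Rightarrow> ((nat \<times> nat) \<Rightarrow> real) \<Rightarrow> ((nat \<times> nat) \<Rightarrow> real)" where
  "gZO Loss \<mu> \<theta> z = (\<lambda>i. (Loss (\<lambda>k. \<theta> k + \<mu> * z k) - Loss (\<lambda>k. \<theta> k - \<mu> * z k)) / (2 * \<mu>) * z i)"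

definition gAda_clip :: "(((nat \<times> nat) \<Rightarrow> real) \<Rightarrow> real) \<Rightarrow> real \<Rightarrow> ((nat \<times> nat) \<Rightarrow> real)
    \<Rightarrow> nat \<Rightarrow> nat pmf \<Rightarrow> real \<Rightarrow> ((nat \<times> nat) \<Rightarrow> real) \<Rightarrow> (nat \<Rightarrow> nat)
    \<Rightarrow> ((nat \<times> nat) \<Rightarrow> real)" where
  "gAda_clip Loss \<mu> \<theta> K P C z \<omega> = (\<lambda>(l, j).
      min (1 / (real K * pmf P l)) C * real (count_draws K \<omega> l) * gZO Loss \<mu> \<theta> z (l, j))"

end

theory Submission
  imports Defs
begin

text \<open>Conditionally on z, the clipped estimator only rescales the l-th block of the dense estimator
by the random factor c_l N_l with c_l = min (1 / (K p_l)) C.  Its second moment is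
c_l^2 E[N_l^2] \<le> c_l^2 (K p_l + (K p_l)^2) \<le> c_l + (c_l K p_l)^2 \<le> C + 1, because c_l \<le> C and
c_l K p_l \<le> 1.  Averaging over z then gives the bound.\<close>

text \<open>The loss is evaluated at \<theta> \<plusminus> \<mu> z, which lies outside the space of the product measure,
so the integrands need not be measurable; the next two inequalities hold for arbitrary integrands.\<close>

lemma nn_integral_pair_le_iterated:
  assumes "sigma_finite_measure M2"
  shows "(\<integral>\<^sup>+ x. f x \<partial>(M1 \<Otimes>\<^sub>M M2)) \<le> (\<integral>\<^sup>+ x. \<integral>\<^sup>+ y. f (x, y) \<partial>M2 \<partial>M1)"
  unfolding nn_integral_def[of "M1 \<Otimes>\<^sub>M M2" f]
proof (rule SUP_least, clarify)
  fix g assume g: "simple_function (M1 \<Otimes>\<^sub>M M2) g" "g \<le> f"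
  have "integral\<^sup>S (M1 \<Otimes>\<^sub>M M2) g = integral\<^sup>N (M1 \<Otimes>\<^sub>M M2) g"
    using g(1) by (simp add: nn_integral_eq_simple_integral)
  also have "\<dots> = (\<integral>\<^sup>+ x. \<integral>\<^sup>+ y. g (x, y) \<partial>M2 \<partial>M1)"
    using g(1) by (simp add: sigma_finite_measure.nn_integral_fst[OF assms] borel_measurable_simple_function)
  also have "\<dots> \<le> (\<integral>\<^sup>+ x. \<integral>\<^sup>+ y. f (x, y) \<partial>M2 \<partial>M1)"
    using g(2) by (intro nn_integral_mono) (auto simp: le_fun_def)
  finally show "integral\<^sup>S (M1 \<Otimes>\<^sub>M M2) g \<le> (\<integral>\<^sup>+ x. \<integral>\<^sup>+ y. f (x, y) \<partial>M2 \<partial>M1)" .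
qed

lemma nn_integral_cmult_le:
  fixes c :: ennreal
  assumes "c < top"
  shows "(\<integral>\<^sup>+ x. c * f x \<partial>M) \<le> c * (\<integral>\<^sup>+ x. f x \<partial>M)"
proof (cases "c = 0")
  case False
  show ?thesis
    unfolding nn_integral_def[of M "\<lambda>x. c * f x"]
  proof (rule SUP_least, clarify)
    fix g assume g: "simple_function M g" "g \<le> (\<lambda>x. c * f x)"
    define h where "h x = g x / c" for x
    have h: "simple_function M h"
      unfolding h_def using g(1) by (rule simple_function_compose1)
    have c: "c \<noteq> 0" "c \<noteq> top"
      using False assms by auto
    have g_eq: "g x = c * h x" for x
      unfolding h_def using c by (metis ennreal_times_divide mult.commute mult_divide_eq_ennreal)
    have h_le: "h x \<le> f x" for x
      using g(2) c unfolding h_def le_fun_def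
      by (metis divide_right_mono_ennreal mult.commute mult_divide_eq_ennreal)
    have "integral\<^sup>S M g = (\<integral>\<^sup>+ x. c * h x \<partial>M)"
      using g(1) by (simp add: g_eq[symmetric] nn_integral_eq_simple_integral)
    also have "\<dots> = c * (\<integral>\<^sup>+ x. h x \<partial>M)"
      using h by (simp add: nn_integral_cmult borel_measurable_simple_function)
    also have "\<dots> \<le> c * (\<integral>\<^sup>+ x. f x \<partial>M)"
      using h_le by (intro mult_left_mono nn_integral_mono) auto
    finally show "integral\<^sup>S M g \<le> c * (\<integral>\<^sup>+ x. f x \<partial>M)" .
  qed
qed simp

lemma sqnorm_gAda_clip:
  "sqnorm I (gAda_clip Loss \<mu> \<theta> K P C z \<omega>)
     = (\<Sum>i\<in>I. ((min (1 / (real K * pmf P (fst i))) C)\<^sup>2 * (real (count_draws K \<omega> (fst i)))\<^sup>2)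
                 * (gZO Loss \<mu> \<theta> z i)\<^sup>2)"
  unfolding sqnorm_def gAda_clip_def
  by (intro sum.cong refl) (auto simp: power_mult_distrib)

lemma nn_integral_draws_both_eq:
  assumes "k < K" "k' < K"
  shows "(\<integral>\<^sup>+ \<omega>. indicator {l} (\<omega> k) * indicator {l} (\<omega> k') \<partial>draws K P)
           = ennreal (if k = k' then pmf P l else (pmf P l)\<^sup>2)"
proof -
  interpret product_sigma_finite "\<lambda>_. measure_pmf P"
    by (simp add: product_sigma_finite_def prob_space_imp_sigma_finite measure_pmf.prob_space_axioms)
  define f :: "nat \<Rightarrow> nat \<Rightarrow> ennreal" where "f i v = (if i \<in> {k, k'} then indicator {l} v else 1)" for i v
  have restrict: "(\<Prod>i<K. if i \<in> {k, k'} then g i else 1) = (\<Prod>i\<in>{k, k'}. g i)" for g :: "nat \<Rightarrow> ennreal"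
  proof -
    have "{..<K} \<inter> {k, k'} = {k, k'}"
      using assms by auto
    then show ?thesis
      using prod.inter_restrict[of "{..<K}" g "{k, k'}"] by simp
  qed
  have "indicator {l} (\<omega> k) * indicator {l} (\<omega> k') = (\<Prod>i<K. f i (\<omega> i))" for \<omega> :: "nat \<Rightarrow> nat"
    unfolding f_def restrict[of "\<lambda>i. indicator {l} (\<omega> i)"]
    by (cases "k = k'") (auto simp: indicator_def)
  moreover have "(\<integral>\<^sup>+ v. f i v \<partial>measure_pmf P) = (if i \<in> {k, k'} then ennreal (pmf P l) else 1)" for i
    by (auto simp: f_def emeasure_pmf_single measure_pmf.emeasure_space_1 simp del: insert_iff)
  moreover note restrict[of "\<lambda>_. ennreal (pmf P l)"]
  ultimately show ?thesis
    unfolding draws_def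
    by (simp add: product_nn_integral_prod measurable_def power2_eq_square ennreal_mult)
qed

lemma nn_integral_count_draws_sq:
  "(\<integral>\<^sup>+ \<omega>. ennreal ((real (count_draws K \<omega> l))\<^sup>2) \<partial>draws K P)
     = ennreal (real K * pmf P l + real K * (real K - 1) * (pmf P l)\<^sup>2)"
proof -
  have count_sq: "ennreal ((real (count_draws K \<omega> l))\<^sup>2)
      = (\<Sum>k<K. \<Sum>k'<K. indicator {l} (\<omega> k) * indicator {l} (\<omega> k'))" for \<omega>
  proof -
    have "real (count_draws K \<omega> l) = (\<Sum>k<K. indicator {l} (\<omega> k))"
      unfolding count_draws_def by (simp add: sum.If_cases indicator_def Int_def conj_commute)
    then have sq: "(real (count_draws K \<omega> l))\<^sup>2
        = (\<Sum>k<K. \<Sum>k'<K. indicator {l} (\<omega> k) * indicator {l} (\<omega> k'))"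
      by (simp add: power2_eq_square sum_product)
    have "ennreal ((real (count_draws K \<omega> l))\<^sup>2)
        = (\<Sum>k<K. ennreal (\<Sum>k'<K. indicator {l} (\<omega> k) * indicator {l} (\<omega> k')))"
      unfolding sq by (rule sum_ennreal[symmetric]) (simp add: sum_nonneg)
    also have "\<dots> = (\<Sum>k<K. \<Sum>k'<K. ennreal (indicator {l} (\<omega> k) * indicator {l} (\<omega> k')))"
      by (intro sum.cong refl sum_ennreal[symmetric]) simp
    also have "\<dots> = (\<Sum>k<K. \<Sum>k'<K. indicator {l} (\<omega> k) * indicator {l} (\<omega> k'))"
      by (intro sum.cong refl) (simp add: indicator_def)
    finally show ?thesis .
  qed
  have draw_indicator_measurable: "(\<lambda>\<omega>. indicator {l} (\<omega> k) :: ennreal) \<in> borel_measurable (draws K P)"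
    if "k < K" for k
    unfolding draws_def using that
    by (intro measurable_compose[OF measurable_component_singleton]) (auto simp: measurable_def)
  have "(\<integral>\<^sup>+ \<omega>. ennreal ((real (count_draws K \<omega> l))\<^sup>2) \<partial>draws K P)
      = (\<Sum>k<K. \<integral>\<^sup>+ \<omega>. (\<Sum>k'<K. indicator {l} (\<omega> k) * indicator {l} (\<omega> k')) \<partial>draws K P)"
    unfolding count_sq
    by (intro nn_integral_sum borel_measurable_sum borel_measurable_times_ennreal draw_indicator_measurable) auto
  also have "\<dots> = (\<Sum>k<K. \<Sum>k'<K. \<integral>\<^sup>+ \<omega>. indicator {l} (\<omega> k) * indicator {l} (\<omega> k') \<partial>draws K P)"
    by (intro sum.cong refl nn_integral_sum borel_measurable_times_ennreal draw_indicator_measurable) auto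
  also have "\<dots> = (\<Sum>k<K. \<Sum>k'<K. ennreal (if k = k' then pmf P l else (pmf P l)\<^sup>2))"
    by (intro sum.cong refl nn_integral_draws_both_eq) auto
  also have "\<dots> = ennreal (\<Sum>k<K. \<Sum>k'<K. if k = k' then pmf P l else (pmf P l)\<^sup>2)"
    by (simp add: sum_nonneg)
  also have "(\<Sum>k<K. \<Sum>k'<K. if k = k' then pmf P l else (pmf P l)\<^sup>2)
      = real K * pmf P l + real K * (real K - 1) * (pmf P l)\<^sup>2"
  proof -
    have inner: "(\<Sum>k'<K. if k = k' then pmf P l else (pmf P l)\<^sup>2) = pmf P l + (real K - 1) * (pmf P l)\<^sup>2"
      if "k < K" for k
    proof -
      have "(\<Sum>k'<K. if k = k' then pmf P l else (pmf P l)\<^sup>2)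
          = (\<Sum>k'<K. (pmf P l)\<^sup>2 + (if k = k' then pmf P l - (pmf P l)\<^sup>2 else 0))"
        by (intro sum.cong) auto
      also have "\<dots> = pmf P l + (real K - 1) * (pmf P l)\<^sup>2"
        using that by (simp add: sum.distrib algebra_simps)
      finally show ?thesis .
    qed
    have "(\<Sum>k<K. \<Sum>k'<K. if k = k' then pmf P l else (pmf P l)\<^sup>2)
        = (\<Sum>k<K. pmf P l + (real K - 1) * (pmf P l)\<^sup>2)"
      by (intro sum.cong refl inner) simp
    then show ?thesis
      by (simp add: algebra_simps)
  qed
  finally show ?thesis .
qed

lemma clip_sq_mult_le:
  fixes x C :: real
  assumes "x > 0" "C > 0"
  shows "(min (1 / x) C)\<^sup>2 * (x + x\<^sup>2) \<le> C + 1"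
proof -
  define c where "c = min (1 / x) C"
  have "c > 0" "c \<le> C"
    using assms by (auto simp: c_def)
  have "c * x \<le> 1"
    using assms by (simp add: c_def min_def field_simps)
  have "c\<^sup>2 * x = c * (c * x)"
    by (simp add: power2_eq_square)
  also have "\<dots> \<le> c"
    using mult_left_mono[OF \<open>c * x \<le> 1\<close>] \<open>c > 0\<close> by simp
  finally have "c\<^sup>2 * x \<le> C"
    using \<open>c \<le> C\<close> by simp
  moreover have "c\<^sup>2 * x\<^sup>2 \<le> 1"
    using \<open>c * x \<le> 1\<close> \<open>c > 0\<close> assms
    by (metis power_le_one less_le mult_pos_pos power_mult_distrib)
  ultimately show ?thesis
    by (simp add: c_def[symmetric] distrib_left)
qed

lemma nn_integral_clipped_count_sq_le:
  assumes "pmf P l > 0" "K \<ge> 1" "C > 0"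
  shows "(\<integral>\<^sup>+ \<omega>. ennreal ((min (1 / (real K * pmf P l)) C)\<^sup>2 * (real (count_draws K \<omega> l))\<^sup>2)
            \<partial>draws K P) \<le> ennreal (C + 1)"
proof -
  define c where "c = min (1 / (real K * pmf P l)) C"
  define x where "x = real K * pmf P l"
  have "x > 0"
    using assms by (simp add: x_def)
  have "(\<integral>\<^sup>+ \<omega>. ennreal (c\<^sup>2 * (real (count_draws K \<omega> l))\<^sup>2) \<partial>draws K P)
      = ennreal (c\<^sup>2) * (\<integral>\<^sup>+ \<omega>. ennreal ((real (count_draws K \<omega> l))\<^sup>2) \<partial>draws K P)"
    by (subst nn_integral_cmult[symmetric])
      (auto simp: ennreal_mult draws_def count_draws_def)
  also have "\<dots> = ennreal (c\<^sup>2 * (x + real K * (real K - 1) * (pmf P l)\<^sup>2))"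
    by (simp add: nn_integral_count_draws_sq x_def ennreal_mult')
  also have "\<dots> \<le> ennreal (c\<^sup>2 * (x + x\<^sup>2))"
  proof -
    have "real K * (real K - 1) * (pmf P l)\<^sup>2 \<le> real K * real K * (pmf P l)\<^sup>2"
      by (intro mult_right_mono mult_left_mono) auto
    also have "\<dots> = x\<^sup>2"
      by (simp add: x_def power2_eq_square)
    finally show ?thesis
      by (intro ennreal_leI mult_left_mono) simp_all
  qed
  also have "\<dots> \<le> ennreal (C + 1)"
    using clip_sq_mult_le[OF \<open>x > 0\<close> \<open>C > 0\<close>] by (intro ennreal_leI) (simp add: c_def x_def)
  finally show ?thesis
    by (simp add: c_def)
qed

lemma nn_integral_sqnorm_gAda_clip_le:
  assumes "K \<ge> 1" "C > 0" "\<And>i. i \<in> I \<Longrightarrow> pmf P (fst i) > 0"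
  shows "(\<integral>\<^sup>+ \<omega>. ennreal (sqnorm I (gAda_clip Loss \<mu> \<theta> K P C z \<omega>)) \<partial>draws K P)
           \<le> ennreal (C + 1) * ennreal (sqnorm I (gZO Loss \<mu> \<theta> z))"
proof -
  define A where "A l \<omega> = ennreal ((min (1 / (real K * pmf P l)) C)\<^sup>2 * (real (count_draws K \<omega> l))\<^sup>2)"
    for l \<omega>
  have "(\<integral>\<^sup>+ \<omega>. ennreal (sqnorm (I) (gAda_clip Loss \<mu> \<theta> K P C z \<omega>)) \<partial>draws K P)
      = (\<integral>\<^sup>+ \<omega>. (\<Sum>i\<in>I. A (fst i) \<omega> * ennreal ((gZO Loss \<mu> \<theta> z i)\<^sup>2)) \<partial>draws K P)"
    unfolding sqnorm_gAda_clip A_def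
    by (simp add: ennreal_mult flip: sum_ennreal)
  also have "\<dots> = (\<Sum>i\<in>I. (\<integral>\<^sup>+ \<omega>. A (fst i) \<omega> \<partial>draws K P) * ennreal ((gZO Loss \<mu> \<theta> z i)\<^sup>2))"
    by (simp add: nn_integral_sum nn_integral_multc A_def draws_def count_draws_def)
  also have "\<dots> \<le> (\<Sum>i\<in>I. ennreal (C + 1) * ennreal ((gZO Loss \<mu> \<theta> z i)\<^sup>2))"
  proof (intro sum_mono mult_right_mono)
    fix i assume "i \<in> I"
    then have "pmf P (fst i) > 0"
      by (rule assms(3))
    then show "(\<integral>\<^sup>+ \<omega>. A (fst i) \<omega> \<partial>draws K P) \<le> ennreal (C + 1)"
      unfolding A_def using assms(1,2) by (rule nn_integral_clipped_count_sq_le)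
  qed auto
  also have "\<dots> = ennreal (C + 1) * ennreal (sqnorm (I) (gZO Loss \<mu> \<theta> z))"
    unfolding sqnorm_def by (simp add: sum_distrib_left[symmetric])
  finally show ?thesis .
qed

theorem mainTheorem4:
  fixes L K :: nat and ds :: "nat \<Rightarrow> nat"
    and Loss :: "((nat \<times> nat) \<Rightarrow> real) \<Rightarrow> real"
    and \<mu> C :: real and \<theta> :: "(nat \<times> nat) \<Rightarrow> real" and P :: "nat pmf"
  assumes "L \<ge> 1"
    and "Loss \<in> borel_measurable (PiM (coords L ds) (\<lambda>_. borel))"
    and "\<mu> > 0" and "K \<ge> 1" and "C > 0"
    and "\<theta> \<in> extensional (coords L ds)"
    and "set_pmf P = {1..L}"
  shows "(\<integral>\<^sup>+ x. ennreal (sqnorm (coords L ds) (gAda_clip Loss \<mu> \<theta> K P C (fst x) (snd x)))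
            \<partial>(gauss (coords L ds) \<Otimes>\<^sub>M draws K P))
         \<le> ennreal (C + 1) * (\<integral>\<^sup>+ z. ennreal (sqnorm (coords L ds) (gZO Loss \<mu> \<theta> z)) \<partial>gauss (coords L ds))"
proof -
  have "sigma_finite_measure (draws K P)"
    unfolding draws_def by (intro prob_space_imp_sigma_finite prob_space_PiM measure_pmf.prob_space_axioms)
  then have "(\<integral>\<^sup>+ x. ennreal (sqnorm (coords L ds) (gAda_clip Loss \<mu> \<theta> K P C (fst x) (snd x)))
              \<partial>(gauss (coords L ds) \<Otimes>\<^sub>M draws K P))
      \<le> (\<integral>\<^sup>+ z. \<integral>\<^sup>+ \<omega>. ennreal (sqnorm (coords L ds) (gAda_clip Loss \<mu> \<theta> K P C z \<omega>)) \<partial>draws K P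
              \<partial>gauss (coords L ds))"
    by (rule order_trans[OF nn_integral_pair_le_iterated]) simp
  also have "\<dots> \<le> (\<integral>\<^sup>+ z. ennreal (C + 1) * ennreal (sqnorm (coords L ds) (gZO Loss \<mu> \<theta> z))
              \<partial>gauss (coords L ds))"
    using assms(4,5,7)
    by (intro nn_integral_mono nn_integral_sqnorm_gAda_clip_le) (auto simp: coords_def pmf_positive)
  also have "\<dots> \<le> ennreal (C + 1) * (\<integral>\<^sup>+ z. ennreal (sqnorm (coords L ds) (gZO Loss \<mu> \<theta> z))
              \<partial>gauss (coords L ds))"
    by (intro nn_integral_cmult_le) simp
  finally show ?thesis .
qed

end
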